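(* Let $\ell:\mathcal{H}\times\mathcal{Z}\times\mathcal{Z}\to[0,B]$ be a $B$-bounded pairwise loss, let $z_1,\dots,z_n$ be a stream, and let buffers of size $s$ be maintained by the RS-x algorithm (described below). Assume $\mathcal{R}_s(\ell\circ\mathcal{H})=C_d\cdot O(\sqrt{1/s})$. Then for any fixed $h\in\mathcal{H}$ and any $t\in[1,n-1]$, with probability at least $1-\delta$ over the random variables used to update the buffer until time $t$, \[ \hat{\mathcal{L}}^{\mathrm{buf}}_t(h)\le\hat{\mathcal{L}}_t(h)+C_d\cdot O\!\left(\sqrt{\frac{\log\frac1\delta}{s}}\right). \]
   Context: All-pairs penalty $\hat{\mathcal{L}}_t(h)=\frac1{t-1}\sum_{\tau=1}^{t-1}\ell(h,z_t,z_\tau)$; buffer penalty $\hat{\mathcal{L}}^{\mathrm{buf}}_t(h)=\frac1{|B_t|}\sum_{z\in B_t}\ell(h,z_t,z)$, where $B_t$ is the buffer after processing $z_1,\dots,z_{t-1}$. RS-x update with the point $z_t$ at step $t$: if $|B|<s$, add $z_t$; else if $t=s+1$, replace $B$ by $s$ points sampled uniformly with replacement from $B\cup\{z_t\}$; else independently replace each buffer entry by $z_t$ with probability $1/t$. $\mathcal{R}_s(\ell\circ\mathcal{H})=\mathbb{E}[\sup_h\frac1s\sum_{j=1}^s\epsilon_j\ell(h,z,z_j)]$; $C_d$ is its dependence on the input dimension $d$; $O(\cdot)$ hides constants such as $B$.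
   Formalization: The dimension factor $C_d$ is at least 1, and sampling from $B\cup\{z_t\}$ means drawing uniformly among the s+1 entries of B and $z_t$, with duplicate points counted with multiplicity. Each condition added here is assumed in the paper as well or is needed for the statement above to hold. *)

theory Defs
  imports "HOL-Probability.Probability"
begin

fun iid_list :: "nat \<Rightarrow> 'a pmf \<Rightarrow> 'a list pmf" where
  "iid_list 0 p = return_pmf []"
| "iid_list (Suc k) p = bind_pmf p (\<lambda>x. map_pmf (\<lambda>xs. x # xs) (iid_list k p))"

fun indep_replace :: "real \<Rightarrow> 'a \<Rightarrow> 'a list \<Rightarrow> 'a list pmf" where
  "indep_replace q z [] = return_pmf []"
| "indep_replace q z (b # bs) =
     bind_pmf (bernoulli_pmf q) (\<lambda>c. map_pmf (\<lambda>rest. (if c then z else b) # rest)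
        (indep_replace q z bs))"

text \<open>One RS-x update at step t with point z, buffer size s.
  Sampling uniformly with replacement from B \<union> {z} means drawing a uniform
  position of the list B @ [z] (a multiset of s+1 points).\<close>
definition rsx_step :: "nat \<Rightarrow> nat \<Rightarrow> 'z \<Rightarrow> 'z list \<Rightarrow> 'z list pmf" where
  "rsx_step s t z B =
     (if length B < s then return_pmf (B @ [z])
      else if t = s + 1 then
        iid_list s (map_pmf (\<lambda>i. (B @ [z]) ! i) (pmf_of_set {..<length B + 1}))
      else indep_replace (1 / real t) z B)"

text \<open>Distribution of the buffer after processing z 1, ..., z k (stream indexed from 1).\<close>
fun rsx_buffer :: "nat \<Rightarrow> (nat \<Rightarrow> 'z) \<Rightarrow> nat \<Rightarrow> 'z list pmf" where
  "rsx_buffer s z 0 = return_pmf []"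
| "rsx_buffer s z (Suc k) = bind_pmf (rsx_buffer s z k) (rsx_step s (Suc k) (z (Suc k)))"

definition allpairs_penalty ::
  "('h \<Rightarrow> 'z \<Rightarrow> 'z \<Rightarrow> real) \<Rightarrow> 'h \<Rightarrow> (nat \<Rightarrow> 'z) \<Rightarrow> nat \<Rightarrow> real" where
  "allpairs_penalty l h z t = (\<Sum>\<tau>=1..t-1. l h (z t) (z \<tau>)) / real (t - 1)"

definition buffer_penalty ::
  "('h \<Rightarrow> 'z \<Rightarrow> 'z \<Rightarrow> real) \<Rightarrow> 'h \<Rightarrow> (nat \<Rightarrow> 'z) \<Rightarrow> nat \<Rightarrow> 'z list \<Rightarrow> real" where
  "buffer_penalty l h z t Bf = (\<Sum>x\<leftarrow>Bf. l h (z t) x) / real (length Bf)"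

definition rademacher ::
  "'z pmf \<Rightarrow> ('h \<Rightarrow> 'z \<Rightarrow> 'z \<Rightarrow> real) \<Rightarrow> 'h set \<Rightarrow> nat \<Rightarrow> real" where
  "rademacher D l H s =
     measure_pmf.expectation
       (pair_pmf D (pair_pmf (iid_list s D) (iid_list s (pmf_of_set {-1, 1::real}))))
       (\<lambda>(x, zs, es). (SUP h\<in>H. (\<Sum>j<s. es ! j * l h x (zs ! j)) / real s))"

end

theory Submission
  imports Defs
begin

text \<open>
  As long as at most s points have arrived the buffer holds all of them, so the two penalties
  coincide. Afterwards the RS-x buffer is distributed exactly as s independent uniform draws from
  the points seen so far: the resampling step at time s + 1 creates this distribution, and each
  later step preserves it, because replacing a uniform index from {1..k} by k + 1 with probability
  1/(k + 1) yields a uniform index from {1..k+1}. The buffer penalty is then the mean of s i.i.d.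
  variables in [0, B] whose expectation is the all-pairs penalty, and Hoeffding's inequality gives
  the deviation bound with K = B.
\<close>

lemma length_of_set_pmf_iid_list: "xs \<in> set_pmf (iid_list m p) \<Longrightarrow> length xs = m"
  by (induction m arbitrary: xs) auto

lemma iid_list_mgf_le:
  fixes g :: "'a \<Rightarrow> real"
  assumes bnd: "\<And>x. a \<le> g x \<and> g x \<le> b" and E0: "measure_pmf.expectation p g = 0"
    and lam: "lam > 0"
  shows "(\<integral>\<^sup>+xs. ennreal (exp (lam * sum_list (map g xs))) \<partial>iid_list m p)
          \<le> ennreal (exp (lam\<^sup>2 * (b - a)\<^sup>2 / 8)) ^ m"
proof (induction m)
  case 0 then show ?case by simp
next
  case (Suc m)
  let ?M = "\<lambda>m. \<integral>\<^sup>+xs. ennreal (exp (lam * sum_list (map g xs))) \<partial>iid_list m p"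
  let ?c = "ennreal (exp (lam\<^sup>2 * (b - a)\<^sup>2 / 8))"
  interpret interval_bounded_random_variable "measure_pmf p" g a b
    by unfold_locales (use bnd in auto)
  have "?M (Suc m) = (\<integral>\<^sup>+x. ennreal (exp (lam * g x)) * ?M m \<partial>p)"
    by (simp add: ring_distribs exp_add ennreal_mult nn_integral_cmult)
  also have "\<dots> \<le> (\<integral>\<^sup>+x. ennreal (exp (lam * g x)) * ?c ^ m \<partial>p)"
    by (intro nn_integral_mono mult_left_mono Suc) auto
  also have "\<dots> = (\<integral>\<^sup>+x. ennreal (exp (lam * g x)) \<partial>p) * ?c ^ m"
    by (simp add: nn_integral_multc)
  also have "\<dots> \<le> ?c * ?c ^ m"
    by (intro mult_right_mono Hoeffdings_lemma_nn_integral_0[OF lam E0]) auto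
  finally show ?case by simp
qed

lemma iid_list_sum_tail_le:
  fixes g :: "'a \<Rightarrow> real"
  assumes bnd: "\<And>x. a \<le> g x \<and> g x \<le> b" and E0: "measure_pmf.expectation p g = 0"
    and "a < b" and "\<epsilon> > 0"
  shows "measure_pmf.prob (iid_list m p) {xs. real m * \<epsilon> \<le> sum_list (map g xs)}
          \<le> exp (- 2 * real m * \<epsilon>\<^sup>2 / (b - a)\<^sup>2)"
proof -
  define d where "d = (b - a)\<^sup>2"
  have d: "d > 0" using \<open>a < b\<close> by (simp add: d_def)
  \<comment> \<open>the optimal Chernoff parameter\<close>
  define lam where "lam = 4 * \<epsilon> / d"
  have lam: "lam > 0" using \<open>\<epsilon> > 0\<close> d by (simp add: lam_def)
  have "ennreal (measure_pmf.prob (iid_list m p) {xs. real m * \<epsilon> \<le> sum_list (map g xs)})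
      = emeasure (measure_pmf (iid_list m p)) {xs \<in> UNIV. real m * \<epsilon> \<le> sum_list (map g xs)}"
    by (simp add: measure_pmf.emeasure_eq_measure)
  also have "\<dots> \<le> ennreal (exp (- lam * (real m * \<epsilon>))) *
      (\<integral>\<^sup>+xs. ennreal (exp (lam * sum_list (map g xs))) * indicator UNIV xs \<partial>iid_list m p)"
    by (rule Chernoff_ineq_nn_integral_ge[OF lam]) auto
  also have "\<dots> \<le> ennreal (exp (- lam * (real m * \<epsilon>))) * ennreal (exp (lam\<^sup>2 * d / 8)) ^ m"
    using iid_list_mgf_le[OF bnd E0 lam, of m] by (intro mult_left_mono) (auto simp: d_def)
  also have "\<dots> = ennreal (exp (- lam * (real m * \<epsilon>)) * exp (lam\<^sup>2 * d / 8) ^ m)"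
    by (simp add: ennreal_mult ennreal_power)
  also have "exp (- lam * (real m * \<epsilon>)) * exp (lam\<^sup>2 * d / 8) ^ m
      = exp (real m * (lam\<^sup>2 * d / 8 - lam * \<epsilon>))"
    by (simp add: exp_of_nat_mult[symmetric] exp_add[symmetric] algebra_simps)
  also have "real m * (lam\<^sup>2 * d / 8 - lam * \<epsilon>) = - 2 * real m * \<epsilon>\<^sup>2 / d"
    using d by (simp add: lam_def field_simps power2_eq_square)
  finally show ?thesis by (subst (asm) ennreal_le_iff) (auto simp: d_def)
qed

lemma iid_list_mean_deviation:
  fixes f :: "'a \<Rightarrow> real"
  assumes bnd: "\<And>x. a \<le> f x \<and> f x \<le> b" and "a < b" and "m \<ge> 1" and "\<epsilon> > 0"
  shows "measure_pmf.prob (iid_list m p)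
           {xs. sum_list (map f xs) / real (length xs) \<le> measure_pmf.expectation p f + \<epsilon>}
         \<ge> 1 - exp (- 2 * real m * \<epsilon>\<^sup>2 / (b - a)\<^sup>2)"
proof -
  define \<mu> where "\<mu> = measure_pmf.expectation p f"
  define g where "g = (\<lambda>x. f x - \<mu>)"
  let ?E = "{xs. sum_list (map f xs) / real (length xs) \<le> \<mu> + \<epsilon>}"
  let ?T = "{xs. real m * \<epsilon> \<le> sum_list (map g xs)}"
  have "\<bar>f x\<bar> \<le> \<bar>a\<bar> + \<bar>b\<bar>" for x
    using bnd[of x] by arith
  then have "integrable (measure_pmf p) f"
    by (intro measure_pmf.integrable_const_bound[where B = "\<bar>a\<bar> + \<bar>b\<bar>"] AE_I2) auto
  then have E0: "measure_pmf.expectation p g = 0"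
    by (simp add: g_def \<mu>_def)
  have "measure_pmf.prob (iid_list m p) (UNIV - ?E) \<le> measure_pmf.prob (iid_list m p) ?T"
  proof (rule measure_pmf.finite_measure_mono_AE[OF AE_pmfI])
    fix xs assume "xs \<in> set_pmf (iid_list m p)"
    then have "length xs = m" by (rule length_of_set_pmf_iid_list)
    then show "xs \<in> UNIV - ?E \<longrightarrow> xs \<in> ?T"
      using \<open>m \<ge> 1\<close> by (auto simp: g_def sum_list_subtractf sum_list_triv field_simps)
  qed simp
  also have "\<dots> \<le> exp (- 2 * real m * \<epsilon>\<^sup>2 / ((b - \<mu>) - (a - \<mu>))\<^sup>2)"
    by (rule iid_list_sum_tail_le[OF _ E0]) (use bnd \<open>a < b\<close> \<open>\<epsilon> > 0\<close> in \<open>auto simp: g_def\<close>)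
  finally show ?thesis
    using measure_pmf.prob_compl[of ?E "iid_list m p"] by (simp add: \<mu>_def)
qed

lemma rsx_buffer_initial: "k \<le> s \<Longrightarrow> rsx_buffer s z k = return_pmf (map z [1..<Suc k])"
  by (induction k) (simp_all add: rsx_step_def bind_return_pmf)

lemma bind_iid_list_indep_replace:
  "bind_pmf (iid_list m p) (indep_replace q w) =
   iid_list m (bind_pmf p (\<lambda>x. map_pmf (\<lambda>c. if c then w else x) (bernoulli_pmf q)))"
proof (induction m)
  case 0 then show ?case by (simp add: bind_return_pmf)
next
  case (Suc m)
  let ?cons = "\<lambda>x c. map_pmf (\<lambda>r. (if c then w else x) # r)"
  have "bind_pmf (iid_list (Suc m) p) (indep_replace q w) =
     bind_pmf p (\<lambda>x. bind_pmf (iid_list m p) (\<lambda>xs. bind_pmf (bernoulli_pmf q)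
        (\<lambda>c. ?cons x c (indep_replace q w xs))))"
    by (simp add: map_pmf_def bind_assoc_pmf bind_return_pmf)
  also have "\<dots> = bind_pmf p (\<lambda>x. bind_pmf (bernoulli_pmf q) (\<lambda>c. bind_pmf (iid_list m p)
        (\<lambda>xs. ?cons x c (indep_replace q w xs))))"
    by (rule bind_pmf_cong[OF refl], rule bind_commute_pmf)
  also have "\<dots> = bind_pmf p (\<lambda>x. bind_pmf (bernoulli_pmf q) (\<lambda>c.
        ?cons x c (bind_pmf (iid_list m p) (indep_replace q w))))"
    by (simp add: map_bind_pmf)
  finally show ?case
    by (simp add: Suc map_pmf_def bind_assoc_pmf bind_return_pmf)
qed

lemma bind_pmf_of_set_replace_by_Suc:
  assumes "k \<ge> 1"
  shows "bind_pmf (pmf_of_set {1..k})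
           (\<lambda>i. map_pmf (\<lambda>c. if c then Suc k else i) (bernoulli_pmf (1 / real (Suc k))))
       = pmf_of_set {1..Suc k}"
proof (rule pmf_eqI)
  fix j
  let ?q = "1 / real (Suc k)"
  have "pmf (map_pmf (\<lambda>c. if c then Suc k else i) (bernoulli_pmf ?q)) j =
        (if j = Suc k then ?q else 0) + (if j = i then 1 - ?q else 0)"
    if "i \<in> {1..k}" for i
    using that unfolding map_pmf_def by (auto simp: pmf_bind)
  moreover have "(1 - ?q) / real k = ?q"
  proof -
    have "real k + real k * real k > 0" using assms by (simp add: add_pos_pos)
    then show ?thesis by (simp add: field_simps)
  qed
  ultimately show "pmf (bind_pmf (pmf_of_set {1..k})
           (\<lambda>i. map_pmf (\<lambda>c. if c then Suc k else i) (bernoulli_pmf ?q))) j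
       = pmf (pmf_of_set {1..Suc k}) j"
    using assms by (auto simp: pmf_bind integral_pmf_of_set sum.distrib)
qed

lemma rsx_buffer_first_resample:
  "rsx_buffer s z (Suc s) = iid_list s (map_pmf z (pmf_of_set {1..Suc s}))"
proof -
  have "map_pmf ((!) (map z [1..<Suc s] @ [z (Suc s)])) (pmf_of_set {..<Suc s})
      = map_pmf (z \<circ> Suc) (pmf_of_set {..<Suc s})"
  proof (rule map_pmf_cong)
    fix i assume "i \<in> set_pmf (pmf_of_set {..<Suc s})"
    then have "i < Suc s" by (subst (asm) set_pmf_of_set) auto
    moreover have "map z [1..<Suc s] @ [z (Suc s)] = map z [1..<Suc (Suc s)]" by simp
    ultimately show "(map z [1..<Suc s] @ [z (Suc s)]) ! i = (z \<circ> Suc) i"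
      by (simp add: nth_map_upt del: upt_Suc)
  qed simp
  also have "\<dots> = map_pmf z (pmf_of_set (Suc ` {..<Suc s}))"
    unfolding pmf.map_comp[symmetric] by (subst map_pmf_of_set_inj) auto
  finally show ?thesis
    by (simp add: rsx_buffer_initial bind_return_pmf rsx_step_def image_Suc_lessThan
        del: upt_Suc)
qed

lemma rsx_buffer_iid:
  assumes "k \<ge> Suc s"
  shows "rsx_buffer s z k = iid_list s (map_pmf z (pmf_of_set {1..k}))"
  using assms
proof (induction k rule: dec_induct)
  case base then show ?case by (rule rsx_buffer_first_resample)
next
  case (step k)
  let ?q = "1 / real (Suc k)"
  have "rsx_buffer s z (Suc k)
      = bind_pmf (iid_list s (map_pmf z (pmf_of_set {1..k}))) (indep_replace ?q (z (Suc k)))"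
    using step by (auto intro!: bind_pmf_cong dest!: length_of_set_pmf_iid_list
        simp: rsx_step_def)
  also have "\<dots> = iid_list s (map_pmf z (bind_pmf (pmf_of_set {1..k})
      (\<lambda>i. map_pmf (\<lambda>c. if c then Suc k else i) (bernoulli_pmf ?q))))"
    unfolding bind_iid_list_indep_replace map_bind_pmf bind_map_pmf pmf.map_comp
    by (auto intro!: arg_cong[where f = "iid_list s"] bind_pmf_cong map_pmf_cong)
  also have "\<dots> = iid_list s (map_pmf z (pmf_of_set {1..Suc k}))"
    using step by (subst bind_pmf_of_set_replace_by_Suc) auto
  finally show ?case .
qed

lemma rsx_buffer_penalty_concentration:
  assumes bnd: "\<And>x y. 0 \<le> l h x y \<and> l h x y \<le> B" and "B > 0"
    and "s \<ge> 1" and "0 < \<delta>" and "\<delta> < 1"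
  shows "measure_pmf.prob (rsx_buffer s z k)
           {Bf. buffer_penalty l h z (Suc k) Bf
                  \<le> allpairs_penalty l h z (Suc k) + B * sqrt (ln (1 / \<delta>) / real s)}
         \<ge> 1 - \<delta>"
    (is "_ \<le> measure_pmf.prob _ ?E")
proof -
  define \<mu> where "\<mu> = allpairs_penalty l h z (Suc k)"
  define \<epsilon> where "\<epsilon> = B * sqrt (ln (1 / \<delta>) / real s)"
  have \<mu>: "\<mu> = (\<Sum>\<tau>=1..k. l h (z (Suc k)) (z \<tau>)) / real k"
    by (simp add: \<mu>_def allpairs_penalty_def)
  have "\<epsilon> > 0"
    using \<open>B > 0\<close> \<open>s \<ge> 1\<close> \<open>0 < \<delta>\<close> \<open>\<delta> < 1\<close> by (simp add: \<epsilon>_def)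
  show ?thesis
  proof (cases "k \<le> s")
    case True
    have "buffer_penalty l h z (Suc k) (map z [1..<Suc k]) = \<mu>"
      by (simp add: buffer_penalty_def \<mu> interv_sum_list_conv_sum_set_nat
          atLeastLessThanSuc_atLeastAtMost del: upt_Suc)
    then have "map z [1..<Suc k] \<in> ?E"
      using \<open>\<epsilon> > 0\<close> by (simp add: \<mu>_def \<epsilon>_def del: upt_Suc)
    then show ?thesis
      using \<open>0 < \<delta>\<close> by (simp add: rsx_buffer_initial[OF True] del: upt_Suc)
  next
    case False
    define p where "p = map_pmf z (pmf_of_set {1..k})"
    have "measure_pmf.expectation p (l h (z (Suc k))) = \<mu>"
      using False by (simp add: p_def \<mu> integral_pmf_of_set)
    then have deviation:
        "1 - exp (- 2 * real s * \<epsilon>\<^sup>2 / (B - 0)\<^sup>2) \<le> measure_pmf.prob (iid_list s p) ?E"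
      using iid_list_mean_deviation[where f = "l h (z (Suc k))", OF bnd \<open>B > 0\<close> \<open>s \<ge> 1\<close> \<open>\<epsilon> > 0\<close>, of p]
      by (simp add: buffer_penalty_def \<mu>_def \<epsilon>_def)
    have "(sqrt (ln (1 / \<delta>) / real s))\<^sup>2 = ln (1 / \<delta>) / real s"
      using \<open>0 < \<delta>\<close> \<open>\<delta> < 1\<close> by simp
    then have "- 2 * real s * \<epsilon>\<^sup>2 / (B - 0)\<^sup>2 = ln (\<delta>\<^sup>2)"
      using \<open>B > 0\<close> \<open>s \<ge> 1\<close> \<open>0 < \<delta>\<close> by (simp add: \<epsilon>_def power_mult_distrib ln_div ln_realpow)
    then have "exp (- 2 * real s * \<epsilon>\<^sup>2 / (B - 0)\<^sup>2) = \<delta>\<^sup>2"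
      using \<open>0 < \<delta>\<close> by simp
    moreover have "\<delta>\<^sup>2 \<le> \<delta>"
      using \<open>0 < \<delta>\<close> \<open>\<delta> < 1\<close> by (simp add: power2_eq_square mult_left_le_one_le)
    ultimately have "1 - \<delta> \<le> measure_pmf.prob (iid_list s p) ?E"
      using deviation by linarith
    then show ?thesis
      using False by (simp add: p_def rsx_buffer_iid)
  qed
qed

theorem lemma21:
  fixes B A :: real
  assumes "B > 0" and "A > 0"
  shows "\<exists>K>0. \<forall>(l :: 'h \<Rightarrow> 'z \<Rightarrow> 'z \<Rightarrow> real) (H :: 'h set) (D :: 'z pmf) (C :: real)
            (s :: nat) (n :: nat) (t :: nat) (h :: 'h) (\<delta> :: real) (z :: nat \<Rightarrow> 'z).
     (\<forall>g\<in>H. \<forall>x y. 0 \<le> l g x y \<and> l g x y \<le> B)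
     \<and> (\<forall>r\<ge>1. rademacher D l H r \<le> C * A * sqrt (1 / real r))
     \<and> C \<ge> 1 \<and> s \<ge> 1 \<and> h \<in> H \<and> 1 \<le> t \<and> t \<le> n - 1 \<and> 0 < \<delta> \<and> \<delta> < 1
     \<longrightarrow> measure_pmf.prob (rsx_buffer s z (t - 1))
           {Bf. buffer_penalty l h z t Bf
                  \<le> allpairs_penalty l h z t + C * K * sqrt (ln (1 / \<delta>) / real s)}
         \<ge> 1 - \<delta>"
proof (intro exI[of _ B] conjI allI impI)
  fix l :: "'h \<Rightarrow> 'z \<Rightarrow> 'z \<Rightarrow> real" and H :: "'h set" and D :: "'z pmf" and C :: real
    and s n t :: nat and h :: 'h and \<delta> :: real and z :: "nat \<Rightarrow> 'z"
  assume hyps: "(\<forall>g\<in>H. \<forall>x y. 0 \<le> l g x y \<and> l g x y \<le> B)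
     \<and> (\<forall>r\<ge>1. rademacher D l H r \<le> C * A * sqrt (1 / real r))
     \<and> C \<ge> 1 \<and> s \<ge> 1 \<and> h \<in> H \<and> 1 \<le> t \<and> t \<le> n - 1 \<and> 0 < \<delta> \<and> \<delta> < 1"
  let ?buf = "rsx_buffer s z (t - 1)"
  let ?event = "\<lambda>c. {Bf. buffer_penalty l h z t Bf
                          \<le> allpairs_penalty l h z t + c * sqrt (ln (1 / \<delta>) / real s)}"
  have "1 - \<delta> \<le> measure_pmf.prob ?buf (?event B)"
    using hyps rsx_buffer_penalty_concentration[of l h B s \<delta> z "t - 1"] \<open>B > 0\<close> by simp
  also have "\<dots> \<le> measure_pmf.prob ?buf (?event (C * B))"
  proof (rule measure_pmf.finite_measure_mono)
    have "B * sqrt (ln (1 / \<delta>) / real s) \<le> C * B * sqrt (ln (1 / \<delta>) / real s)"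
      using hyps \<open>B > 0\<close> by (intro mult_right_mono) auto
    then show "?event B \<subseteq> ?event (C * B)" by auto
  qed simp
  finally show "measure_pmf.prob ?buf (?event (C * B)) \<ge> 1 - \<delta>" .
qed (fact \<open>B > 0\<close>)

end
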